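(* Let $P\ge 2$ be an integer. Let $\omega_1,\dots,\omega_P$ be pairwise distinct nonzero real numbers, let $\beta_1,\dots,\beta_P$ be nonzero real numbers, and let $\kappa_1,\dots,\kappa_P$ be pairwise distinct nonzero real numbers such that $1-\kappa_i\omega_j\neq 0$ for all $i,j\in\{1,\dots,P\}$. (a) Let $A=(a_{ij})_{i,j=1}^{P}$ with $a_{ij}=\dfrac{\kappa_i\beta_j}{1-\kappa_i\omega_j}$. Then $A$ is invertible and $A^{-1}=(\tilde a_{ij})_{i,j=1}^P$ with $$\tilde a_{ij}=\frac{1-\kappa_j\omega_i}{\beta_i\,\kappa_j}\;\prod_{\substack{k=1\\k\neq j}}^{P}\frac{1-\kappa_k\omega_i}{\kappa_k-\kappa_j}\;\prod_{\substack{l=1\\l\neq i}}^{P}\frac{1-\kappa_j\omega_l}{\omega_l-\omega_i}.$$ (b) Let $B=(b_{ij})_{i,j=1}^{P-1}$ with $b_{ij}=\dfrac{1-\omega_j/\omega_P}{1-\kappa_i\omega_j}$. Then $B$ is invertible and $B^{-1}=(\tilde b_{ij})_{i,j=1}^{P-1}$ with $$\tilde b_{ij}=\frac{\omega_P\,(1-\kappa_j\omega_i)}{1-\kappa_j\omega_P}\;\prod_{\substack{k=1\\k\neq j}}^{P-1}\frac{1-\kappa_k\omega_i}{\kappa_k-\kappa_j}\;\prod_{\substack{l=1\\l\neq i}}^{P}\frac{1-\kappa_j\omega_l}{\omega_l-\omega_i}.$$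
   Context: In the paper, $\omega_i$ are the weights of a $P$-level Scheduled Relaxation Jacobi scheme, $\beta_i$ their relative frequencies, $\kappa_1,\dots,\kappa_{P-1}$ the interior local maxima of the per-iteration amplification factor and $\kappa_P$ is set equal to the upper endpoint $\kappa_M=2$. In products, each factor appears once unless it depends on the product index. *)

theory Defs
  imports "Jordan_Normal_Form.Matrix"
begin

(* Indices are 0-based: the paper's index i \<in> {1..P} corresponds to i-1 \<in> {0..<P}.
   In particular the paper's \<omega>_P is \<omega> (P-1). *)

definition SRJ_A :: "nat \<Rightarrow> (nat \<Rightarrow> real) \<Rightarrow> (nat \<Rightarrow> real) \<Rightarrow> (nat \<Rightarrow> real) \<Rightarrow> real mat" where
  "SRJ_A P \<omega> \<beta> \<kappa> = mat P P (\<lambda>(i,j). \<kappa> i * \<beta> j / (1 - \<kappa> i * \<omega> j))"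

definition SRJ_A_inv :: "nat \<Rightarrow> (nat \<Rightarrow> real) \<Rightarrow> (nat \<Rightarrow> real) \<Rightarrow> (nat \<Rightarrow> real) \<Rightarrow> real mat" where
  "SRJ_A_inv P \<omega> \<beta> \<kappa> = mat P P (\<lambda>(i,j).
     (1 - \<kappa> j * \<omega> i) / (\<beta> i * \<kappa> j)
     * (\<Prod>k\<in>{0..<P} - {j}. (1 - \<kappa> k * \<omega> i) / (\<kappa> k - \<kappa> j))
     * (\<Prod>l\<in>{0..<P} - {i}. (1 - \<kappa> j * \<omega> l) / (\<omega> l - \<omega> i)))"

definition SRJ_B :: "nat \<Rightarrow> (nat \<Rightarrow> real) \<Rightarrow> (nat \<Rightarrow> real) \<Rightarrow> real mat" where
  "SRJ_B P \<omega> \<kappa> = mat (P - 1) (P - 1) (\<lambda>(i,j). (1 - \<omega> j / \<omega> (P - 1)) / (1 - \<kappa> i * \<omega> j))"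

definition SRJ_B_inv :: "nat \<Rightarrow> (nat \<Rightarrow> real) \<Rightarrow> (nat \<Rightarrow> real) \<Rightarrow> real mat" where
  "SRJ_B_inv P \<omega> \<kappa> = mat (P - 1) (P - 1) (\<lambda>(i,j).
     \<omega> (P - 1) * (1 - \<kappa> j * \<omega> i) / (1 - \<kappa> j * \<omega> (P - 1))
     * (\<Prod>k\<in>{0..<P - 1} - {j}. (1 - \<kappa> k * \<omega> i) / (\<kappa> k - \<kappa> j))
     * (\<Prod>l\<in>{0..<P} - {i}. (1 - \<kappa> j * \<omega> l) / (\<omega> l - \<omega> i)))"

end

theory Submission
  imports Defs "HOL-Computational_Algebra.Polynomial" "Jordan_Normal_Form.Determinant"
begin

text \<open>The \<open>(i, j)\<close> entry of either product is a constant times a sum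
  \<open>\<Sum>\<^sub>k q\<^sub>j(\<omega> k) / ((1 - \<kappa> i \<omega> k) \<Prod>\<^sub>l\<^sub>\<noteq>\<^sub>k (\<omega> l - \<omega> k))\<close>, where
  \<open>q\<^sub>j(x) = \<Prod>\<^sub>m\<^sub>\<noteq>\<^sub>j (1 - \<kappa> m x)\<close> (for \<open>B\<close> multiplied by \<open>\<omega>\<^sub>P - x\<close>) has degree less than the
  number of nodes. Lagrange interpolation at the nodes, read as the partial fraction expansion of
  \<open>q\<^sub>j(x) / \<Prod>\<^sub>l (\<omega> l - x)\<close> at \<open>x = 1 / \<kappa> i\<close>, evaluates the sum to
  \<open>(-\<kappa> i)\<^sup>P\<^sup>-\<^sup>1 q\<^sub>j(1 / \<kappa> i) / \<Prod>\<^sub>l (1 - \<kappa> i \<omega> l)\<close>. This vanishes for \<open>i \<noteq> j\<close>, as \<open>1 / \<kappa> i\<close>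
  is a root of \<open>q\<^sub>j\<close>; for \<open>i = j\<close> the prefactors of the claimed inverse make the entry \<open>1\<close>.\<close>

lemma degree_prod_linear_le:
  fixes a b :: "'b \<Rightarrow> 'a::comm_semiring_1"
  assumes "finite T"
  shows "degree (\<Prod>l\<in>T. [:a l, b l:]) \<le> card T"
proof -
  have "degree (\<Prod>l\<in>T. [:a l, b l:]) \<le> (\<Sum>l\<in>T. degree [:a l, b l:])"
    by (rule degree_prod_sum_le[OF assms, unfolded comp_def])
  also have "\<dots> \<le> (\<Sum>l\<in>T. 1)"
    by (intro sum_mono) (simp add: degree_pCons_eq_if)
  finally show ?thesis by simp
qed

lemma prod_node_differences_nonzero:
  fixes \<omega> :: "'b \<Rightarrow> 'a::field"
  assumes "finite S" "inj_on \<omega> S" "k \<in> S"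
  shows "(\<Prod>l\<in>S-{k}. \<omega> l - \<omega> k) \<noteq> 0"
  using assms by (auto simp: prod_zero_iff dest: inj_onD)

lemma lagrange_interpolation:
  fixes \<omega> :: "'b \<Rightarrow> 'a::field" and p :: "'a poly"
  assumes fin: "finite S" and inj: "inj_on \<omega> S" and deg: "degree p < card S"
  shows "poly p x = (\<Sum>k\<in>S. poly p (\<omega> k) * (\<Prod>l\<in>S-{k}. \<omega> l - x) / (\<Prod>l\<in>S-{k}. \<omega> l - \<omega> k))"
proof -
  define L where "L = (\<Sum>k\<in>S. smult (poly p (\<omega> k) / (\<Prod>l\<in>S-{k}. \<omega> l - \<omega> k)) (\<Prod>l\<in>S-{k}. [:\<omega> l, -1:]))"
  have poly_L: "poly L y = (\<Sum>k\<in>S. poly p (\<omega> k) * (\<Prod>l\<in>S-{k}. \<omega> l - y) / (\<Prod>l\<in>S-{k}. \<omega> l - \<omega> k))" for y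
    unfolding L_def poly_sum poly_smult poly_prod by (simp add: mult.commute)
  have "degree L \<le> card S - 1"
    unfolding L_def
  proof (rule degree_sum_le[OF fin], rule order.trans[OF degree_smult_le])
    fix k assume "k \<in> S"
    then show "degree (\<Prod>l\<in>S-{k}. [:\<omega> l, -1:]) \<le> card S - 1"
      using degree_prod_linear_le[where T = "S - {k}"] fin by simp
  qed
  then have deg_L: "degree L < card S"
    using deg by linarith
  have "p = L"
  proof (rule poly_eqI_degree[where A = "\<omega> ` S"])
    fix z assume "z \<in> \<omega> ` S"
    then obtain j where j: "j \<in> S" "z = \<omega> j" by auto
    have "poly L z = poly p (\<omega> j) * (\<Prod>l\<in>S-{j}. \<omega> l - \<omega> j) / (\<Prod>l\<in>S-{j}. \<omega> l - \<omega> j)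
        + (\<Sum>k\<in>S-{j}. poly p (\<omega> k) * (\<Prod>l\<in>S-{k}. \<omega> l - \<omega> j) / (\<Prod>l\<in>S-{k}. \<omega> l - \<omega> k))"
      unfolding poly_L j(2) by (rule sum.remove[OF fin j(1)])
    also have "(\<Sum>k\<in>S-{j}. poly p (\<omega> k) * (\<Prod>l\<in>S-{k}. \<omega> l - \<omega> j) / (\<Prod>l\<in>S-{k}. \<omega> l - \<omega> k)) = 0"
    proof (rule sum.neutral, rule ballI)
      fix k assume "k \<in> S - {j}"
      then have "(\<Prod>l\<in>S-{k}. \<omega> l - \<omega> j) = 0"
        using fin j(1) by (intro prod_zero) auto
      then show "poly p (\<omega> k) * (\<Prod>l\<in>S-{k}. \<omega> l - \<omega> j) / (\<Prod>l\<in>S-{k}. \<omega> l - \<omega> k) = 0"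
        by simp
    qed
    finally show "poly p z = poly L z"
      using prod_node_differences_nonzero[OF fin inj j(1)] j by simp
  qed (use deg deg_L inj in \<open>simp_all add: card_image\<close>)
  then have "poly p x = poly L x"
    by simp
  also have "\<dots> = (\<Sum>k\<in>S. poly p (\<omega> k) * (\<Prod>l\<in>S-{k}. \<omega> l - x) / (\<Prod>l\<in>S-{k}. \<omega> l - \<omega> k))"
    by (rule poly_L)
  finally show ?thesis .
qed

lemma partial_fraction_nodes:
  fixes \<omega> :: "'b \<Rightarrow> 'a::field" and q :: "'a poly"
  assumes fin: "finite S" and inj: "inj_on \<omega> S" and deg: "degree q < card S" and x: "x \<notin> \<omega> ` S"
  shows "(\<Sum>k\<in>S. poly q (\<omega> k) / ((\<omega> k - x) * (\<Prod>l\<in>S-{k}. \<omega> l - \<omega> k)))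
       = poly q x / (\<Prod>l\<in>S. \<omega> l - x)"
proof -
  have "(\<Prod>l\<in>S. \<omega> l - x) \<noteq> 0"
    using fin x by auto
  show ?thesis
    unfolding lagrange_interpolation[OF fin inj deg, of x] sum_divide_distrib
  proof (intro sum.cong refl)
    fix k assume k: "k \<in> S"
    have "\<omega> k - x \<noteq> 0"
      using x k by auto
    moreover have split: "(\<Prod>l\<in>S. \<omega> l - x) = (\<omega> k - x) * (\<Prod>l\<in>S-{k}. \<omega> l - x)"
      by (rule prod.remove[OF fin k])
    ultimately have "(\<Prod>l\<in>S-{k}. \<omega> l - x) \<noteq> 0"
      using \<open>(\<Prod>l\<in>S. \<omega> l - x) \<noteq> 0\<close> by auto
    with \<open>\<omega> k - x \<noteq> 0\<close> show "poly q (\<omega> k) / ((\<omega> k - x) * (\<Prod>l\<in>S-{k}. \<omega> l - \<omega> k))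
        = poly q (\<omega> k) * (\<Prod>l\<in>S-{k}. \<omega> l - x) / (\<Prod>l\<in>S-{k}. \<omega> l - \<omega> k) / (\<Prod>l\<in>S. \<omega> l - x)"
      unfolding split using prod_node_differences_nonzero[OF fin inj k]
      by (simp add: field_simps)
  qed
qed

lemma prod_one_minus_scaled:
  fixes a :: "'b \<Rightarrow> 'a::field"
  assumes "c \<noteq> 0"
  shows "(\<Prod>l\<in>T. 1 - c * a l) = (-c) ^ card T * (\<Prod>l\<in>T. a l - 1 / c)"
proof -
  have "(\<Prod>l\<in>T. 1 - c * a l) = (\<Prod>l\<in>T. (-c) * (a l - 1 / c))"
    using assms by (intro prod.cong) (auto simp: field_simps)
  also have "\<dots> = (\<Prod>l\<in>T. -c) * (\<Prod>l\<in>T. a l - 1 / c)"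
    by (rule prod.distrib)
  finally show ?thesis
    by simp
qed

lemma partial_fraction_nodes_reciprocal:
  fixes \<omega> :: "'b \<Rightarrow> 'a::field" and q :: "'a poly"
  assumes fin: "finite S" and inj: "inj_on \<omega> S" and deg: "degree q < card S"
    and c: "c \<noteq> 0" and nz: "\<And>l. l \<in> S \<Longrightarrow> 1 - c * \<omega> l \<noteq> 0"
  shows "(\<Sum>k\<in>S. poly q (\<omega> k) / ((1 - c * \<omega> k) * (\<Prod>l\<in>S-{k}. \<omega> l - \<omega> k)))
       = (-c) ^ (card S - 1) * poly q (1 / c) / (\<Prod>l\<in>S. 1 - c * \<omega> l)"
proof -
  have x: "1 / c \<notin> \<omega> ` S"
  proof
    assume "1 / c \<in> \<omega> ` S"
    then obtain l where "l \<in> S" "\<omega> l = 1 / c"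
      by auto
    then show False
      using nz[of l] c by simp
  qed
  obtain n where n: "card S = Suc n"
    using deg by (cases "card S") auto
  have "(\<Sum>k\<in>S. poly q (\<omega> k) / ((1 - c * \<omega> k) * (\<Prod>l\<in>S-{k}. \<omega> l - \<omega> k)))
      = - (1 / c) * (\<Sum>k\<in>S. poly q (\<omega> k) / ((\<omega> k - 1 / c) * (\<Prod>l\<in>S-{k}. \<omega> l - \<omega> k)))"
    unfolding sum_distrib_left
  proof (intro sum.cong refl)
    fix k assume k: "k \<in> S"
    have "\<omega> k - 1 / c = - (1 - c * \<omega> k) / c"
      using c by (simp add: field_simps)
    then show "poly q (\<omega> k) / ((1 - c * \<omega> k) * (\<Prod>l\<in>S-{k}. \<omega> l - \<omega> k))
        = - (1 / c) * (poly q (\<omega> k) / ((\<omega> k - 1 / c) * (\<Prod>l\<in>S-{k}. \<omega> l - \<omega> k)))"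
      using c nz[OF k] prod_node_differences_nonzero[OF fin inj k] by (simp add: field_simps)
  qed
  also have "\<dots> = - (1 / c) * (poly q (1 / c) / (\<Prod>l\<in>S. \<omega> l - 1 / c))"
    by (simp only: partial_fraction_nodes[OF fin inj deg x])
  also have "(\<Prod>l\<in>S. \<omega> l - 1 / c) = (\<Prod>l\<in>S. 1 - c * \<omega> l) / (-c) ^ card S"
    using prod_one_minus_scaled[OF c, of \<omega> S] c by simp
  also have "- (1 / c) * (poly q (1 / c) / ((\<Prod>l\<in>S. 1 - c * \<omega> l) / (-c) ^ card S))
      = (-c) ^ (card S - 1) * poly q (1 / c) / (\<Prod>l\<in>S. 1 - c * \<omega> l)"
  proof -
    have C_nz: "(\<Prod>l\<in>S. 1 - c * \<omega> l) \<noteq> 0"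
      using fin nz by auto
    have key: "- (1 / c) * (a / (C / (-c) ^ Suc n)) = (-c) ^ n * a / C" if "C \<noteq> 0" for a C
      using c that by (simp add: field_simps)
    show ?thesis
      unfolding n diff_Suc_1 by (rule key[OF C_nz])
  qed
  finally show ?thesis .
qed

lemma prod_one_minus_reciprocal:
  fixes \<kappa> :: "'b \<Rightarrow> 'a::field"
  assumes fin: "finite T" and "i \<in> T" "j \<in> T" and \<kappa>: "\<kappa> i \<noteq> 0"
  shows "(\<Prod>m\<in>T-{j}. 1 - \<kappa> m / \<kappa> i)
       = (if i = j then (-1 / \<kappa> i) ^ (card T - 1) * (\<Prod>m\<in>T-{j}. \<kappa> m - \<kappa> j) else 0)"
proof (cases "i = j")
  case True
  have "(\<Prod>m\<in>T-{j}. 1 - \<kappa> m / \<kappa> i) = (\<Prod>m\<in>T-{j}. 1 - 1 / \<kappa> i * \<kappa> m)"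
    by simp
  also have "\<dots> = (-1 / \<kappa> i) ^ (card T - 1) * (\<Prod>m\<in>T-{j}. \<kappa> m - \<kappa> j)"
    using prod_one_minus_scaled[of "1 / \<kappa> i" \<kappa> "T - {j}"] \<kappa> True assms(3) fin by simp
  finally show ?thesis
    using True by simp
next
  case False
  then have "i \<in> T - {j}"
    using assms by auto
  then show ?thesis
    using False fin \<kappa> by (simp add: prod_zero_iff) blast
qed

lemma SRJ_A_mult_SRJ_A_inv:
  fixes \<omega> \<beta> \<kappa> :: "nat \<Rightarrow> real"
  assumes inj_\<omega>: "inj_on \<omega> {0..<P}" and \<beta>: "\<And>i. i < P \<Longrightarrow> \<beta> i \<noteq> 0"
    and inj_\<kappa>: "inj_on \<kappa> {0..<P}" and \<kappa>: "\<And>i. i < P \<Longrightarrow> \<kappa> i \<noteq> 0"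
    and nz: "\<And>i j. i < P \<Longrightarrow> j < P \<Longrightarrow> 1 - \<kappa> i * \<omega> j \<noteq> 0"
  shows "SRJ_A P \<omega> \<beta> \<kappa> * SRJ_A_inv P \<omega> \<beta> \<kappa> = 1\<^sub>m P"
proof (rule eq_matI)
  define S where "S = {0..<P}"
  define q where "q j = (\<Prod>m\<in>S-{j}. [:1, - \<kappa> m:])" for j
  define C where "C j = (\<Prod>l\<in>S. 1 - \<kappa> j * \<omega> l)" for j
  define K where "K j = (\<Prod>m\<in>S-{j}. \<kappa> m - \<kappa> j)" for j
  define D where "D k = (\<Prod>l\<in>S-{k}. \<omega> l - \<omega> k)" for k
  have fin: "finite S" and card_S: "card S = P"
    by (simp_all add: S_def)
  have poly_q: "poly (q j) w = (\<Prod>m\<in>S-{j}. 1 - \<kappa> m * w)" for j w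
    unfolding q_def poly_prod by (simp add: mult.commute)
  have deg_q: "degree (q j) < card S" if "j \<in> S" for j
  proof -
    have "degree (q j) \<le> card (S - {j})"
      unfolding q_def using fin by (intro degree_prod_linear_le) simp
    also have "\<dots> < card S"
      using fin that by (rule card_Diff1_less)
    finally show ?thesis .
  qed
  have K_nz: "K j \<noteq> 0" if "j \<in> S" for j
    unfolding K_def using prod_node_differences_nonzero[OF fin _ that] inj_\<kappa> by (simp add: S_def)
  have D_nz: "D k \<noteq> 0" if "k \<in> S" for k
    unfolding D_def using prod_node_differences_nonzero[OF fin _ that] inj_\<omega> by (simp add: S_def)
  have C_nz: "C j \<noteq> 0" if "j \<in> S" for j
    unfolding C_def using fin that nz by (simp add: S_def)
  have entry: "\<kappa> i * \<beta> k / (1 - \<kappa> i * \<omega> k) * ((1 - \<kappa> j * \<omega> k) / (\<beta> k * \<kappa> j)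
       * (\<Prod>m\<in>S-{j}. (1 - \<kappa> m * \<omega> k) / (\<kappa> m - \<kappa> j))
       * (\<Prod>l\<in>S-{k}. (1 - \<kappa> j * \<omega> l) / (\<omega> l - \<omega> k)))
     = \<kappa> i * C j / (\<kappa> j * K j) * (poly (q j) (\<omega> k) / ((1 - \<kappa> i * \<omega> k) * D k))"
    if i: "i \<in> S" and j: "j \<in> S" and k: "k \<in> S" for i j k
  proof -
    have C_split: "C j = (1 - \<kappa> j * \<omega> k) * (\<Prod>l\<in>S-{k}. 1 - \<kappa> j * \<omega> l)"
      unfolding C_def by (rule prod.remove[OF fin k])
    have "\<beta> k \<noteq> 0" "\<kappa> j \<noteq> 0" "1 - \<kappa> i * \<omega> k \<noteq> 0"
      using \<beta> \<kappa> nz i j k by (auto simp: S_def)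
    then show ?thesis
      unfolding prod_dividef poly_q C_split K_def[symmetric] D_def[symmetric]
      using K_nz[OF j] D_nz[OF k] by (simp add: field_simps)
  qed
  show "dim_row (SRJ_A P \<omega> \<beta> \<kappa> * SRJ_A_inv P \<omega> \<beta> \<kappa>) = dim_row (1\<^sub>m P)"
    "dim_col (SRJ_A P \<omega> \<beta> \<kappa> * SRJ_A_inv P \<omega> \<beta> \<kappa>) = dim_col (1\<^sub>m P)"
    by (simp_all add: SRJ_A_def SRJ_A_inv_def)
  fix i j assume "i < dim_row (1\<^sub>m P)" "j < dim_col (1\<^sub>m P)"
  then have i: "i \<in> S" and j: "j \<in> S"
    by (simp_all add: S_def)
  have "(SRJ_A P \<omega> \<beta> \<kappa> * SRJ_A_inv P \<omega> \<beta> \<kappa>) $$ (i, j)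
      = (\<Sum>k\<in>S. \<kappa> i * \<beta> k / (1 - \<kappa> i * \<omega> k) * ((1 - \<kappa> j * \<omega> k) / (\<beta> k * \<kappa> j)
          * (\<Prod>m\<in>S-{j}. (1 - \<kappa> m * \<omega> k) / (\<kappa> m - \<kappa> j))
          * (\<Prod>l\<in>S-{k}. (1 - \<kappa> j * \<omega> l) / (\<omega> l - \<omega> k))))"
    using i j by (simp add: SRJ_A_def SRJ_A_inv_def scalar_prod_def S_def)
  also have "\<dots> = \<kappa> i * C j / (\<kappa> j * K j) * (\<Sum>k\<in>S. poly (q j) (\<omega> k) / ((1 - \<kappa> i * \<omega> k) * D k))"
    unfolding sum_distrib_left using i j by (intro sum.cong refl entry)
  also have "(\<Sum>k\<in>S. poly (q j) (\<omega> k) / ((1 - \<kappa> i * \<omega> k) * D k))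
      = (- \<kappa> i) ^ (P - 1) * poly (q j) (1 / \<kappa> i) / C i"
    unfolding D_def C_def card_S[symmetric]
    using inj_\<omega> \<kappa> nz i by (intro partial_fraction_nodes_reciprocal fin deg_q j) (auto simp: S_def)
  also have "\<kappa> i * C j / (\<kappa> j * K j) * ((- \<kappa> i) ^ (P - 1) * poly (q j) (1 / \<kappa> i) / C i) = 1\<^sub>m P $$ (i, j)"
  proof -
    have "\<kappa> i \<noteq> 0"
      using \<kappa> i by (simp add: S_def)
    moreover have "poly (q j) (1 / \<kappa> i) = (\<Prod>m\<in>S-{j}. 1 - \<kappa> m / \<kappa> i)"
      by (simp add: poly_q)
    moreover have "\<dots> = (if i = j then (-1 / \<kappa> i) ^ (P - 1) * K j else 0)"
      unfolding K_def card_S[symmetric] using \<open>\<kappa> i \<noteq> 0\<close> by (rule prod_one_minus_reciprocal[OF fin i j])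
    moreover have "(- \<kappa> i) ^ (P - 1) * (-1 / \<kappa> i) ^ (P - 1) = 1"
      using \<open>\<kappa> i \<noteq> 0\<close> by (simp flip: power_mult_distrib)
    ultimately show ?thesis
      using i j C_nz[OF i] K_nz[OF j] by (auto simp: S_def)
  qed
  finally show "(SRJ_A P \<omega> \<beta> \<kappa> * SRJ_A_inv P \<omega> \<beta> \<kappa>) $$ (i, j) = 1\<^sub>m P $$ (i, j)" .
qed

lemma SRJ_B_mult_SRJ_B_inv:
  fixes \<omega> \<kappa> :: "nat \<Rightarrow> real"
  assumes inj_\<omega>: "inj_on \<omega> {0..<P}" and \<omega>_last: "\<omega> (P - 1) \<noteq> 0"
    and inj_\<kappa>: "inj_on \<kappa> {0..<P}" and \<kappa>: "\<And>i. i < P \<Longrightarrow> \<kappa> i \<noteq> 0"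
    and nz: "\<And>i j. i < P \<Longrightarrow> j < P \<Longrightarrow> 1 - \<kappa> i * \<omega> j \<noteq> 0"
  shows "SRJ_B P \<omega> \<kappa> * SRJ_B_inv P \<omega> \<kappa> = 1\<^sub>m (P - 1)"
proof (rule eq_matI)
  define S where "S = {0..<P}"
  define T where "T = {0..<P - 1}"
  define w where "w = \<omega> (P - 1)"
  define q where "q j = [:w, -1:] * (\<Prod>m\<in>T-{j}. [:1, - \<kappa> m:])" for j
  define C where "C j = (\<Prod>l\<in>S. 1 - \<kappa> j * \<omega> l)" for j
  define K where "K j = (\<Prod>m\<in>T-{j}. \<kappa> m - \<kappa> j)" for j
  define D where "D k = (\<Prod>l\<in>S-{k}. \<omega> l - \<omega> k)" for k
  have fin: "finite S" "finite T" and card_S: "card S = P" and card_T: "card T = P - 1"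
    and T_sub: "T \<subseteq> S"
    by (auto simp: S_def T_def)
  have poly_q: "poly (q j) x = (w - x) * (\<Prod>m\<in>T-{j}. 1 - \<kappa> m * x)" for j x
    unfolding q_def poly_mult poly_prod by (simp add: mult.commute)
  have deg_q: "degree (q j) < card S" if "j \<in> T" for j
  proof -
    have "degree (q j) \<le> degree [:w, -1:] + degree (\<Prod>m\<in>T-{j}. [:1, - \<kappa> m:])"
      unfolding q_def by (rule degree_mult_le)
    also have "\<dots> \<le> 1 + card (T - {j})"
      using fin by (intro add_mono degree_prod_linear_le) simp_all
    also have "\<dots> < card S"
      using that fin card_S card_T by (simp add: T_def)
    finally show ?thesis .
  qed
  have K_nz: "K j \<noteq> 0" if "j \<in> T" for j
    unfolding K_def using fin(2) inj_on_subset[OF inj_\<kappa> T_sub[unfolded S_def]] that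
    by (rule prod_node_differences_nonzero)
  have D_nz: "D k \<noteq> 0" if "k \<in> S" for k
    unfolding D_def using prod_node_differences_nonzero[OF fin(1) _ that] inj_\<omega> by (simp add: S_def)
  have C_nz: "C j \<noteq> 0" if "j \<in> S" for j
    unfolding C_def using fin that nz by (simp add: S_def)
  have entry: "(1 - \<omega> k / w) / (1 - \<kappa> i * \<omega> k) * (w * (1 - \<kappa> j * \<omega> k) / (1 - \<kappa> j * w)
       * (\<Prod>m\<in>T-{j}. (1 - \<kappa> m * \<omega> k) / (\<kappa> m - \<kappa> j))
       * (\<Prod>l\<in>S-{k}. (1 - \<kappa> j * \<omega> l) / (\<omega> l - \<omega> k)))
     = C j / ((1 - \<kappa> j * w) * K j) * (poly (q j) (\<omega> k) / ((1 - \<kappa> i * \<omega> k) * D k))"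
    if i: "i \<in> T" and j: "j \<in> T" and k: "k \<in> S" for i j k
  proof -
    have C_split: "C j = (1 - \<kappa> j * \<omega> k) * (\<Prod>l\<in>S-{k}. 1 - \<kappa> j * \<omega> l)"
      unfolding C_def by (rule prod.remove[OF fin(1) k])
    have "(1 - \<omega> k / w) * w = w - \<omega> k"
      using \<omega>_last by (simp add: w_def field_simps)
    then show ?thesis
      unfolding prod_dividef poly_q C_split K_def[symmetric] D_def[symmetric]
      by (simp add: divide_inverse inverse_mult_distrib ac_simps)
  qed
  show "dim_row (SRJ_B P \<omega> \<kappa> * SRJ_B_inv P \<omega> \<kappa>) = dim_row (1\<^sub>m (P - 1))"
    "dim_col (SRJ_B P \<omega> \<kappa> * SRJ_B_inv P \<omega> \<kappa>) = dim_col (1\<^sub>m (P - 1))"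
    by (simp_all add: SRJ_B_def SRJ_B_inv_def)
  fix i j assume "i < dim_row (1\<^sub>m (P - 1))" "j < dim_col (1\<^sub>m (P - 1))"
  then have i: "i \<in> T" and j: "j \<in> T"
    by (simp_all add: T_def)
  have S_eq: "S = insert (P - 1) T" and last_notin: "P - 1 \<notin> T"
    using i by (auto simp: S_def T_def)
  have "(SRJ_B P \<omega> \<kappa> * SRJ_B_inv P \<omega> \<kappa>) $$ (i, j)
      = (\<Sum>k\<in>T. (1 - \<omega> k / w) / (1 - \<kappa> i * \<omega> k) * (w * (1 - \<kappa> j * \<omega> k) / (1 - \<kappa> j * w)
          * (\<Prod>m\<in>T-{j}. (1 - \<kappa> m * \<omega> k) / (\<kappa> m - \<kappa> j))
          * (\<Prod>l\<in>S-{k}. (1 - \<kappa> j * \<omega> l) / (\<omega> l - \<omega> k))))"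
    using i j by (simp add: SRJ_B_def SRJ_B_inv_def scalar_prod_def S_def T_def w_def)
  also have "\<dots> = C j / ((1 - \<kappa> j * w) * K j) * (\<Sum>k\<in>T. poly (q j) (\<omega> k) / ((1 - \<kappa> i * \<omega> k) * D k))"
    unfolding sum_distrib_left using i j T_sub by (intro sum.cong refl entry) auto
  also have "(\<Sum>k\<in>T. poly (q j) (\<omega> k) / ((1 - \<kappa> i * \<omega> k) * D k))
      = (\<Sum>k\<in>S. poly (q j) (\<omega> k) / ((1 - \<kappa> i * \<omega> k) * D k))"
    \<comment> \<open>the factor \<open>\<omega>\<^sub>P - x\<close> of \<open>q j\<close> kills the extra term \<open>k = P - 1\<close>\<close>
    unfolding S_eq using fin(2) last_notin by (simp add: poly_q w_def)
  also have "\<dots> = (- \<kappa> i) ^ (P - 1) * poly (q j) (1 / \<kappa> i) / C i"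
    unfolding D_def C_def card_S[symmetric]
    using inj_\<omega> \<kappa> nz i T_sub by (intro partial_fraction_nodes_reciprocal fin deg_q j) (auto simp: S_def T_def)
  also have "C j / ((1 - \<kappa> j * w) * K j) * ((- \<kappa> i) ^ (P - 1) * poly (q j) (1 / \<kappa> i) / C i)
      = 1\<^sub>m (P - 1) $$ (i, j)"
  proof -
    have \<kappa>_i: "\<kappa> i \<noteq> 0"
      using \<kappa> i by (simp add: T_def)
    have q_at: "poly (q j) (1 / \<kappa> i)
        = (w - 1 / \<kappa> i) * (if i = j then (-1 / \<kappa> i) ^ (P - 2) * K j else 0)"
      unfolding poly_q K_def using prod_one_minus_reciprocal[where \<kappa> = \<kappa>, OF fin(2) i j \<kappa>_i]
      by (simp add: card_T numeral_2_eq_2)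
    show ?thesis
    proof (cases "i = j")
      case True
      have "P - 1 = Suc (P - 2)"
        using i by (simp add: T_def)
      then have "(- \<kappa> i) ^ (P - 1) * (-1 / \<kappa> i) ^ (P - 2) = - \<kappa> i"
        using \<kappa>_i by (simp flip: power_mult_distrib)
      then have "(- \<kappa> i) ^ (P - 1) * poly (q j) (1 / \<kappa> i) = (1 - \<kappa> i * w) * K i"
        unfolding q_at using True \<kappa>_i by (simp add: algebra_simps)
      moreover have "1 - \<kappa> i * w \<noteq> 0"
        using nz i by (simp add: T_def w_def)
      ultimately show ?thesis
        using True i C_nz K_nz T_sub by (auto simp: T_def)
    qed (use q_at i j in \<open>simp add: T_def\<close>)
  qed
  finally show "(SRJ_B P \<omega> \<kappa> * SRJ_B_inv P \<omega> \<kappa>) $$ (i, j) = 1\<^sub>m (P - 1) $$ (i, j)" .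
qed

lemma inverts_mat_if_mult_eq_one:
  fixes A B :: "'a::field mat"
  assumes A: "A \<in> carrier_mat n n" and B: "B \<in> carrier_mat n n" and AB: "A * B = 1\<^sub>m n"
  shows "invertible_mat A \<and> inverts_mat A B \<and> inverts_mat B A"
proof -
  have "B * A = 1\<^sub>m n"
    by (rule mat_mult_left_right_inverse[OF A B AB])
  then have "inverts_mat A B" "inverts_mat B A"
    using A B AB by (simp_all add: inverts_mat_def)
  then show ?thesis
    using A unfolding invertible_mat_def by auto
qed

theorem lemma1:
  fixes P :: nat and \<omega> \<beta> \<kappa> :: "nat \<Rightarrow> real"
  assumes "P \<ge> 2"
    and "inj_on \<omega> {0..<P}" and "\<And>i. i < P \<Longrightarrow> \<omega> i \<noteq> 0"
    and "\<And>i. i < P \<Longrightarrow> \<beta> i \<noteq> 0"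
    and "inj_on \<kappa> {0..<P}" and "\<And>i. i < P \<Longrightarrow> \<kappa> i \<noteq> 0"
    and "\<And>i j. i < P \<Longrightarrow> j < P \<Longrightarrow> 1 - \<kappa> i * \<omega> j \<noteq> 0"
  shows "(invertible_mat (SRJ_A P \<omega> \<beta> \<kappa>)
          \<and> inverts_mat (SRJ_A P \<omega> \<beta> \<kappa>) (SRJ_A_inv P \<omega> \<beta> \<kappa>)
          \<and> inverts_mat (SRJ_A_inv P \<omega> \<beta> \<kappa>) (SRJ_A P \<omega> \<beta> \<kappa>))
       \<and> (invertible_mat (SRJ_B P \<omega> \<kappa>)
          \<and> inverts_mat (SRJ_B P \<omega> \<kappa>) (SRJ_B_inv P \<omega> \<kappa>)
          \<and> inverts_mat (SRJ_B_inv P \<omega> \<kappa>) (SRJ_B P \<omega> \<kappa>))"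
proof (intro conjI[OF inverts_mat_if_mult_eq_one inverts_mat_if_mult_eq_one])
  show "SRJ_A P \<omega> \<beta> \<kappa> * SRJ_A_inv P \<omega> \<beta> \<kappa> = 1\<^sub>m P"
    using assms by (intro SRJ_A_mult_SRJ_A_inv) auto
  have "\<omega> (P - 1) \<noteq> 0"
    using assms(1,3) by simp
  then show "SRJ_B P \<omega> \<kappa> * SRJ_B_inv P \<omega> \<kappa> = 1\<^sub>m (P - 1)"
    using assms by (intro SRJ_B_mult_SRJ_B_inv) auto
qed (simp_all add: SRJ_A_def SRJ_A_inv_def SRJ_B_def SRJ_B_inv_def)

end
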